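(* Let $(A,\circ,[\cdot,\cdot])$ be a dual pre-Poisson algebra and $(B,\diamond,\odot)$ a pre-Poisson algebra. Define bilinear operations on $A\otimes B$ by $$(x\otimes a)\diamond_1(y\otimes b)=(x\circ y)\otimes(a\diamond b),\qquad (x\otimes a)\diamond_2(y\otimes b)=[x,y]\otimes(a\odot b),$$ for $x,y\in A$, $a,b\in B$. Then $(A\otimes B,\diamond_1)$ and $(A\otimes B,\diamond_2)$ are pre-Lie algebras, $(A\otimes B,\diamond_1,\diamond_2)$ is a compatible pre-Lie algebra, and $(A\otimes B,\{\cdot,\cdot\}_1,\{\cdot,\cdot\}_2)$ with $\{X,Y\}_k=X\diamond_k Y-Y\diamond_k X$ ($k=1,2$) is a compatible Lie algebra.
   Context: Field $\mathbb{F}$ of characteristic $0$. A dual pre-Poisson algebra: $x\circ(y\circ z)=(x\circ y)\circ z=(y\circ x)\circ z$; $[x,[y,z]]=[[x,y],z]+[y,[x,z]]$; $[x,y\circ z]=[x,y]\circ z+y\circ[x,z]$; $[x\circ y,z]=x\circ[y,z]+y\circ[x,z]$; $[x,y]\circ z=-[y,x]\circ z$. A pre-Lie algebra $(A,\diamond)$: $x\diamond(y\diamond z)-(x\diamond y)\diamond z=y\diamond(x\diamond z)-(y\diamond x)\diamond z$. A pre-Poisson algebra $(B,\diamond,\odot)$: $(B,\diamond)$ pre-Lie; $(B,\odot)$ Zinbiel, i.e. $x\odot(y\odot z)=(x\odot y+y\odot x)\odot z$; and $(x\diamond y-y\diamond x)\odot z=x\diamond(y\odot z)-y\odot(x\diamond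 z)$, $(x\odot y+y\odot x)\diamond z=x\odot(y\diamond z)+y\odot(x\diamond z)$. A compatible pre-Lie algebra $(A,\diamond,\diamond')$ consists of two pre-Lie products such that $k_1\,x\diamond y+k_2\,x\diamond' y$ is a pre-Lie product for all $k_1,k_2\in\mathbb{F}$. A compatible Lie algebra $(A,\{\cdot,\cdot\},\{\cdot,\cdot\}')$ consists of two Lie brackets such that $k_1\{\cdot,\cdot\}+k_2\{\cdot,\cdot\}'$ is a Lie bracket for all $k_1,k_2\in\mathbb{F}$. *)

theory Defs
  imports Complex_Main
begin

definition bilinear_map ::
  "('k::field \<Rightarrow> 'a::ab_group_add \<Rightarrow> 'a) \<Rightarrow> ('k \<Rightarrow> 'b::ab_group_add \<Rightarrow> 'b)
   \<Rightarrow> ('k \<Rightarrow> 'c::ab_group_add \<Rightarrow> 'c) \<Rightarrow> ('a \<Rightarrow> 'b \<Rightarrow> 'c) \<Rightarrow> bool" where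
  "bilinear_map sA sB sC f \<longleftrightarrow>
     (\<forall>y. Vector_Spaces.linear sA sC (\<lambda>x. f x y)) \<and> (\<forall>x. Vector_Spaces.linear sB sC (f x))"

abbreviation bilinear_op :: "('k::field \<Rightarrow> 'a::ab_group_add \<Rightarrow> 'a) \<Rightarrow> ('a \<Rightarrow> 'a \<Rightarrow> 'a) \<Rightarrow> bool" where
  "bilinear_op s m \<equiv> bilinear_map s s s m"

text \<open>tp : A \<times> B \<rightarrow> T exhibits T as the tensor product A \<otimes> B, with x \<otimes> a = tp x a.
  Characterization: tp bilinear, pure tensors span T, and every bilinear form on A \<times> B
  factors through a linear functional on T (uniqueness is automatic from spanning).\<close>
definition is_tensor_product ::
  "('k::field \<Rightarrow> 'a::ab_group_add \<Rightarrow> 'a) \<Rightarrow> ('k \<Rightarrow> 'b::ab_group_add \<Rightarrow> 'b)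
   \<Rightarrow> ('k \<Rightarrow> 't::ab_group_add \<Rightarrow> 't) \<Rightarrow> ('a \<Rightarrow> 'b \<Rightarrow> 't) \<Rightarrow> bool" where
  "is_tensor_product sA sB sT tp \<longleftrightarrow>
     vector_space sA \<and> vector_space sB \<and> vector_space sT \<and>
     bilinear_map sA sB sT tp \<and>
     module.span sT {tp x a | x a. True} = UNIV \<and>
     (\<forall>\<phi>. bilinear_map sA sB ((*) :: 'k \<Rightarrow> 'k \<Rightarrow> 'k) \<phi> \<longrightarrow>
        (\<exists>h. Vector_Spaces.linear sT ((*) :: 'k \<Rightarrow> 'k \<Rightarrow> 'k) h \<and> (\<forall>x a. h (tp x a) = \<phi> x a)))"

definition pre_Lie :: "('k::field \<Rightarrow> 'a::ab_group_add \<Rightarrow> 'a) \<Rightarrow> ('a \<Rightarrow> 'a \<Rightarrow> 'a) \<Rightarrow> bool" where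
  "pre_Lie s m \<longleftrightarrow> vector_space s \<and> bilinear_op s m \<and>
     (\<forall>x y z. m x (m y z) - m (m x y) z = m y (m x z) - m (m y x) z)"

definition Lie_algebra :: "('k::field \<Rightarrow> 'a::ab_group_add \<Rightarrow> 'a) \<Rightarrow> ('a \<Rightarrow> 'a \<Rightarrow> 'a) \<Rightarrow> bool" where
  "Lie_algebra s b \<longleftrightarrow> vector_space s \<and> bilinear_op s b \<and>
     (\<forall>x. b x x = 0) \<and>
     (\<forall>x y z. b x (b y z) + b y (b z x) + b z (b x y) = 0)"

definition compatible_pre_Lie ::
  "('k::field \<Rightarrow> 'a::ab_group_add \<Rightarrow> 'a) \<Rightarrow> ('a \<Rightarrow> 'a \<Rightarrow> 'a) \<Rightarrow> ('a \<Rightarrow> 'a \<Rightarrow> 'a) \<Rightarrow> bool" where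
  "compatible_pre_Lie s m1 m2 \<longleftrightarrow> pre_Lie s m1 \<and> pre_Lie s m2 \<and>
     (\<forall>k1 k2. pre_Lie s (\<lambda>x y. s k1 (m1 x y) + s k2 (m2 x y)))"

definition compatible_Lie ::
  "('k::field \<Rightarrow> 'a::ab_group_add \<Rightarrow> 'a) \<Rightarrow> ('a \<Rightarrow> 'a \<Rightarrow> 'a) \<Rightarrow> ('a \<Rightarrow> 'a \<Rightarrow> 'a) \<Rightarrow> bool" where
  "compatible_Lie s b1 b2 \<longleftrightarrow> Lie_algebra s b1 \<and> Lie_algebra s b2 \<and>
     (\<forall>k1 k2. Lie_algebra s (\<lambda>x y. s k1 (b1 x y) + s k2 (b2 x y)))"

definition dual_pre_Poisson ::
  "('k::field \<Rightarrow> 'a::ab_group_add \<Rightarrow> 'a) \<Rightarrow> ('a \<Rightarrow> 'a \<Rightarrow> 'a) \<Rightarrow> ('a \<Rightarrow> 'a \<Rightarrow> 'a) \<Rightarrow> bool" where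
  "dual_pre_Poisson s c br \<longleftrightarrow> vector_space s \<and> bilinear_op s c \<and> bilinear_op s br \<and>
     (\<forall>x y z. c x (c y z) = c (c x y) z \<and> c (c x y) z = c (c y x) z) \<and>
     (\<forall>x y z. br x (br y z) = br (br x y) z + br y (br x z)) \<and>
     (\<forall>x y z. br x (c y z) = c (br x y) z + c y (br x z)) \<and>
     (\<forall>x y z. br (c x y) z = c x (br y z) + c y (br x z)) \<and>
     (\<forall>x y z. c (br x y) z = - c (br y x) z)"

definition pre_Poisson ::
  "('k::field \<Rightarrow> 'b::ab_group_add \<Rightarrow> 'b) \<Rightarrow> ('b \<Rightarrow> 'b \<Rightarrow> 'b) \<Rightarrow> ('b \<Rightarrow> 'b \<Rightarrow> 'b) \<Rightarrow> bool" where
  "pre_Poisson s dm od \<longleftrightarrow> pre_Lie s dm \<and> bilinear_op s od \<and>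
     (\<forall>x y z. od x (od y z) = od (od x y + od y x) z) \<and>
     (\<forall>x y z. od (dm x y - dm y x) z = dm x (od y z) - od y (dm x z)) \<and>
     (\<forall>x y z. dm (od x y + od y x) z = od x (dm y z) + od y (dm x z))"

end

theory Submission
  imports Defs
begin

text \<open>Both pre-Lie identities and the compatibility condition say that certain sums of
  associators are symmetric in their first two arguments. These sums are trilinear and pure tensors
  span \<open>A \<otimes> B\<close>, so it suffices to check them on pure tensors, where they reduce to the axioms
  of \<open>A\<close> and \<open>B\<close>: for \<open>\<diamond>\<^sub>1\<close> the perm identities of \<open>\<circ>\<close> with the pre-Lie identity of \<open>\<diamond>\<close>,
  for \<open>\<diamond>\<^sub>2\<close> the antisymmetry of \<open>[[x,y],z]\<close> in \<open>x, y\<close> (a consequence of the Leibniz rule) with the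
  Zinbiel identity, and for the cross terms the remaining Leibniz rules of \<open>A\<close> with the
  pre-Poisson compatibilities of \<open>B\<close>. Taking commutators turns the compatible pre-Lie algebra
  into a compatible Lie algebra.\<close>

lemma bilinear_map_add_scale:
  assumes "bilinear_map s1 s2 s3 m"
  shows "m (x + y) z = m x z + m y z" "m (s1 c x) z = s3 c (m x z)"
    "m u (v + w) = m u v + m u w" "m u (s2 c v) = s3 c (m u v)"
  using assms by (auto simp: bilinear_map_def Vector_Spaces.linear_iff)

lemma bilinear_map_diff_minus_zero:
  assumes "bilinear_map s1 s2 s3 m"
  shows "m (x - y) z = m x z - m y z" "m (- x) z = - m x z" "m 0 z = 0"
    "m u (v - w) = m u v - m u w" "m u (- v) = - m u v" "m u 0 = 0"
proof -
  interpret left: additive "\<lambda>x. m x z"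
    by standard (rule bilinear_map_add_scale(1)[OF assms])
  interpret right: additive "m u"
    by standard (rule bilinear_map_add_scale(3)[OF assms])
  show "m (x - y) z = m x z - m y z" "m (- x) z = - m x z" "m 0 z = 0"
    by (fact left.diff left.minus left.zero)+
  show "m u (v - w) = m u v - m u w" "m u (- v) = - m u v" "m u 0 = 0"
    by (fact right.diff right.minus right.zero)+
qed

lemmas bilinear_map_simps = bilinear_map_add_scale bilinear_map_diff_minus_zero

lemma bilinear_mapI:
  assumes "vector_space s1" "vector_space s2" "vector_space s3"
    "\<And>x y z. m (x + y) z = m x z + m y z" "\<And>c x z. m (s1 c x) z = s3 c (m x z)"
    "\<And>x y z. m x (y + z) = m x y + m x z" "\<And>c x y. m x (s2 c y) = s3 c (m x y)"
  shows "bilinear_map s1 s2 s3 m"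
  using assms by (auto simp: bilinear_map_def Vector_Spaces.linear_iff)

definition trilinear_op :: "('k::field \<Rightarrow> 'a::ab_group_add \<Rightarrow> 'a) \<Rightarrow> ('a \<Rightarrow> 'a \<Rightarrow> 'a \<Rightarrow> 'a) \<Rightarrow> bool"
  where "trilinear_op s F \<longleftrightarrow>
    (\<forall>y z. Vector_Spaces.linear s s (\<lambda>x. F x y z)) \<and>
    (\<forall>x z. Vector_Spaces.linear s s (\<lambda>y. F x y z)) \<and>
    (\<forall>x y. Vector_Spaces.linear s s (F x y))"

lemma trilinear_op_swap12:
  "trilinear_op s F \<Longrightarrow> trilinear_op s (\<lambda>x y z. F y x z)"
  by (simp add: trilinear_op_def)

lemma trilinear_op_add:
  assumes F: "trilinear_op s F" and G: "trilinear_op s G"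
  shows "trilinear_op s (\<lambda>x y z. F x y z + G x y z)"
proof -
  have "vector_space s"
    using F by (simp add: trilinear_op_def Vector_Spaces.linear_iff)
  then interpret vector_space s .
  show ?thesis
    using F G by (auto simp: trilinear_op_def Vector_Spaces.linear_iff scale_right_distrib)
qed

lemma trilinear_op_eq_on_span:
  assumes vs: "vector_space s" and span: "module.span s G = UNIV"
    and F: "trilinear_op s F" and H: "trilinear_op s H"
    and eq: "\<And>x y z. x \<in> G \<Longrightarrow> y \<in> G \<Longrightarrow> z \<in> G \<Longrightarrow> F x y z = H x y z"
  shows "F x y z = H x y z"
proof -
  have pair: "vector_space_pair s s"
    by (intro vector_space_pair.intro vs)
  note eq_on_span = vector_space_pair.linear_eq_on_span[OF pair]
  have lin: "Vector_Spaces.linear s s (\<lambda>x. F x y z)" "Vector_Spaces.linear s s (\<lambda>y. F x y z)"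
    "Vector_Spaces.linear s s (F x y)" "Vector_Spaces.linear s s (\<lambda>x. H x y z)"
    "Vector_Spaces.linear s s (\<lambda>y. H x y z)" "Vector_Spaces.linear s s (H x y)" for x y z
    using F H by (simp_all add: trilinear_op_def)
  have in_span: "x \<in> module.span s G" for x
    using span by simp
  have eq1: "F x y z = H x y z" if "y \<in> G" "z \<in> G" for x y z
    by (rule eq_on_span[OF lin(1,4) _ in_span]) (simp add: eq that)
  have eq2: "F x y z = H x y z" if "z \<in> G" for x y z
    by (rule eq_on_span[OF lin(2,5) _ in_span]) (simp add: eq1 that)
  show ?thesis
    by (rule eq_on_span[OF lin(3,6) _ in_span]) (simp add: eq2)
qed

definition associator :: "('a \<Rightarrow> 'a \<Rightarrow> 'a) \<Rightarrow> ('a \<Rightarrow> 'a \<Rightarrow> 'a) \<Rightarrow> 'a \<Rightarrow> 'a \<Rightarrow> 'a \<Rightarrow> 'a::ab_group_add"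
  where "associator m1 m2 x y z = m1 x (m2 y z) - m1 (m2 x y) z"

lemma trilinear_op_associator:
  fixes s :: "'k::field \<Rightarrow> 'a::ab_group_add \<Rightarrow> 'a"
  assumes vs: "vector_space s" and m1: "bilinear_op s m1" and m2: "bilinear_op s m2"
  shows "trilinear_op s (associator m1 m2)"
proof -
  interpret vector_space s by (rule vs)
  show ?thesis
    by (auto simp: trilinear_op_def Vector_Spaces.linear_iff vs associator_def
        bilinear_map_simps[OF m1] bilinear_map_simps[OF m2] algebra_simps)
qed

lemma pre_Lie_iff_associator:
  "pre_Lie s m \<longleftrightarrow> vector_space s \<and> bilinear_op s m \<and>
     (\<forall>x y z. associator m m x y z = associator m m y x z)"
  by (simp add: pre_Lie_def associator_def)

lemma pre_Lie_linear_combination: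
  fixes s :: "'k::field \<Rightarrow> 'a::ab_group_add \<Rightarrow> 'a"
  assumes vs: "vector_space s" and m1: "bilinear_op s m1" and m2: "bilinear_op s m2"
    and sym1: "\<And>x y z. associator m1 m1 x y z = associator m1 m1 y x z"
    and sym2: "\<And>x y z. associator m2 m2 x y z = associator m2 m2 y x z"
    and sym12: "\<And>x y z. associator m1 m2 x y z + associator m2 m1 x y z
                        = associator m1 m2 y x z + associator m2 m1 y x z"
  shows "pre_Lie s (\<lambda>x y. s k1 (m1 x y) + s k2 (m2 x y))" (is "pre_Lie s ?m")
proof -
  interpret vector_space s by (rule vs)
  note simps = bilinear_map_simps[OF m1] bilinear_map_simps[OF m2]
  have expand: "associator ?m ?m x y z =
      s (k1 * k1) (associator m1 m1 x y z)
    + s (k1 * k2) (associator m1 m2 x y z + associator m2 m1 x y z)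
    + s (k2 * k2) (associator m2 m2 x y z)" for x y z
    by (simp add: associator_def simps algebra_simps)
  have "bilinear_op s ?m"
    by (rule bilinear_mapI) (auto simp: vs simps algebra_simps)
  moreover have "associator ?m ?m x y z = associator ?m ?m y x z" for x y z
    unfolding expand sym1[of x] sym2[of x] sym12[of x] ..
  ultimately show ?thesis
    by (simp add: pre_Lie_iff_associator vs)
qed

lemma compatible_pre_LieI:
  fixes s :: "'k::field \<Rightarrow> 'a::ab_group_add \<Rightarrow> 'a"
  assumes vs: "vector_space s" and m1: "bilinear_op s m1" and m2: "bilinear_op s m2"
    and sym1: "\<And>x y z. associator m1 m1 x y z = associator m1 m1 y x z"
    and sym2: "\<And>x y z. associator m2 m2 x y z = associator m2 m2 y x z"
    and sym12: "\<And>x y z. associator m1 m2 x y z + associator m2 m1 x y z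
                        = associator m1 m2 y x z + associator m2 m1 y x z"
  shows "compatible_pre_Lie s m1 m2"
  unfolding compatible_pre_Lie_def pre_Lie_iff_associator[of s m1] pre_Lie_iff_associator[of s m2]
  using pre_Lie_linear_combination[OF assms] vs m1 m2 sym1 sym2 by blast

lemma Lie_algebra_commutator:
  fixes s :: "'k::field \<Rightarrow> 'a::ab_group_add \<Rightarrow> 'a"
  assumes "pre_Lie s m"
  shows "Lie_algebra s (\<lambda>x y. m x y - m y x)"
proof -
  have vs: "vector_space s" and m: "bilinear_op s m"
    and sym: "\<And>x y z. associator m m x y z = associator m m y x z"
    using assms by (simp_all add: pre_Lie_iff_associator)
  interpret vector_space s by (rule vs)
  note simps = bilinear_map_simps[OF m]
  have "bilinear_op s (\<lambda>x y. m x y - m y x)"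
    by (rule bilinear_mapI) (auto simp: vs simps algebra_simps)
  moreover have
    "(m x (m y z - m z y) - m (m y z - m z y) x) + (m y (m z x - m x z) - m (m z x - m x z) y)
       + (m z (m x y - m y x) - m (m x y - m y x) z) =
     (associator m m x y z - associator m m y x z) + (associator m m y z x - associator m m z y x)
       + (associator m m z x y - associator m m x z y)" for x y z
    by (simp add: associator_def simps algebra_simps)
  ultimately show ?thesis
    by (simp add: Lie_algebra_def vs sym)
qed

lemma compatible_Lie_commutators:
  fixes s :: "'k::field \<Rightarrow> 'a::ab_group_add \<Rightarrow> 'a"
  assumes "compatible_pre_Lie s m1 m2"
  shows "compatible_Lie s (\<lambda>x y. m1 x y - m1 y x) (\<lambda>x y. m2 x y - m2 y x)"
proof -
  have vs: "vector_space s"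
    using assms by (simp add: compatible_pre_Lie_def pre_Lie_def)
  interpret vector_space s by (rule vs)
  have "Lie_algebra s (\<lambda>x y. s k1 (m1 x y - m1 y x) + s k2 (m2 x y - m2 y x))" for k1 k2
  proof -
    let ?m = "\<lambda>x y. s k1 (m1 x y) + s k2 (m2 x y)"
    have "(\<lambda>x y. s k1 (m1 x y - m1 y x) + s k2 (m2 x y - m2 y x)) = (\<lambda>x y. ?m x y - ?m y x)"
      by (simp add: algebra_simps)
    then show ?thesis
      using assms Lie_algebra_commutator[of s ?m] by (simp add: compatible_pre_Lie_def)
  qed
  with assms show ?thesis
    unfolding compatible_pre_Lie_def compatible_Lie_def by (blast intro: Lie_algebra_commutator)
qed

locale dual_pre_Poisson_tensor_pre_Poisson =
  fixes sA :: "'k::field \<Rightarrow> 'a::ab_group_add \<Rightarrow> 'a"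
    and sB :: "'k \<Rightarrow> 'b::ab_group_add \<Rightarrow> 'b"
    and sT :: "'k \<Rightarrow> 't::ab_group_add \<Rightarrow> 't"
    and circ br :: "'a \<Rightarrow> 'a \<Rightarrow> 'a"
    and dm od :: "'b \<Rightarrow> 'b \<Rightarrow> 'b"
    and tp :: "'a \<Rightarrow> 'b \<Rightarrow> 't"
    and d1 d2 :: "'t \<Rightarrow> 't \<Rightarrow> 't"
  assumes A: "dual_pre_Poisson sA circ br"
    and B: "pre_Poisson sB dm od"
    and tp: "bilinear_map sA sB sT tp"
    and d1_tp: "\<And>x y a b. d1 (tp x a) (tp y b) = tp (circ x y) (dm a b)"
    and d2_tp: "\<And>x y a b. d2 (tp x a) (tp y b) = tp (br x y) (od a b)"
begin

lemma circ_assoc: "circ x (circ y z) = circ (circ x y) z"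
  and circ_left_comm: "circ (circ x y) z = circ (circ y x) z"
  and br_Leibniz: "br x (br y z) = br (br x y) z + br y (br x z)"
  and br_circ_right: "br x (circ y z) = circ (br x y) z + circ y (br x z)"
  and br_circ_left: "br (circ x y) z = circ x (br y z) + circ y (br x z)"
  and circ_br_antisym: "circ (br x y) z = - circ (br y x) z"
  using A unfolding dual_pre_Poisson_def by blast+

lemma dm_pre_Lie: "dm a (dm b c) - dm (dm a b) c = dm b (dm a c) - dm (dm b a) c"
  and od_Zinbiel: "od a (od b c) = od (od a b + od b a) c"
  and dm_commutator_od: "od (dm a b - dm b a) c = dm a (od b c) - od b (dm a c)"
  and od_sym_dm: "dm (od a b + od b a) c = od a (dm b c) + od b (dm a c)"
  using B unfolding pre_Poisson_def pre_Lie_def by blast+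

lemma od_bilinear: "bilinear_op sB od"
  and dm_bilinear: "bilinear_op sB dm"
  using B unfolding pre_Poisson_def pre_Lie_def by blast+

lemmas tp_simps = bilinear_map_simps[OF tp]

lemma d1_associator_tp_sym:
  "associator d1 d1 (tp x a) (tp y b) (tp z c) = associator d1 d1 (tp y b) (tp x a) (tp z c)"
proof -
  have circ_swap: "circ y (circ x z) = circ (circ x y) z"
    using circ_assoc circ_left_comm by metis
  have "tp (circ (circ x y) z) (dm a (dm b c) - dm (dm a b) c)
      = tp (circ (circ x y) z) (dm b (dm a c) - dm (dm b a) c)"
    by (simp only: dm_pre_Lie)
  then show ?thesis
    unfolding associator_def d1_tp circ_assoc circ_swap circ_left_comm[of y x z] tp_simps .
qed

lemma d2_associator_tp_sym:
  "associator d2 d2 (tp x a) (tp y b) (tp z c) = associator d2 d2 (tp y b) (tp x a) (tp z c)"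
proof -
  have "br (br x y) z + br (br y x) z = 0"
    using br_Leibniz[of x y z] br_Leibniz[of y x z] by (simp add: algebra_simps)
  then have br_antisym: "br (br y x) z = - br (br x y) z"
    by (metis minus_unique)
  have od_expand: "od a (od b c) = od (od a b) c + od (od b a) c"
    "od b (od a c) = od (od b a) c + od (od a b) c"
    using od_Zinbiel bilinear_map_simps[OF od_bilinear] by simp_all
  show ?thesis
    unfolding associator_def d2_tp br_Leibniz[of x y z] br_antisym od_expand
    by (simp add: tp_simps algebra_simps)
qed

lemma d1_d2_associators_tp_sym:
  "associator d1 d2 (tp x a) (tp y b) (tp z c) + associator d2 d1 (tp x a) (tp y b) (tp z c)
   = associator d1 d2 (tp y b) (tp x a) (tp z c) + associator d2 d1 (tp y b) (tp x a) (tp z c)"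
proof -
  have dm_od: "dm a (od b c) = od (dm a b) c - od (dm b a) c + od b (dm a c)"
    "dm b (od a c) = od (dm b a) c - od (dm a b) c + od a (dm b c)"
    using dm_commutator_od[of a b c] dm_commutator_od[of b a c] bilinear_map_simps[OF od_bilinear]
    by (simp_all add: algebra_simps)
  have dm_od_sym: "dm (od b a) c = od a (dm b c) + od b (dm a c) - dm (od a b) c"
    using od_sym_dm[of a b c] bilinear_map_simps[OF dm_bilinear]
    by (simp add: algebra_simps)
  show ?thesis
    unfolding associator_def d1_tp d2_tp br_circ_right br_circ_left
      circ_br_antisym[of y x z] dm_od dm_od_sym
    by (simp add: tp_simps algebra_simps)
qed

end

theorem proposition2p20:
  fixes sA :: "'k::field_char_0 \<Rightarrow> 'a::ab_group_add \<Rightarrow> 'a"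
    and sB :: "'k \<Rightarrow> 'b::ab_group_add \<Rightarrow> 'b"
    and sT :: "'k \<Rightarrow> 't::ab_group_add \<Rightarrow> 't"
    and circ br :: "'a \<Rightarrow> 'a \<Rightarrow> 'a"
    and dm od :: "'b \<Rightarrow> 'b \<Rightarrow> 'b"
    and tp :: "'a \<Rightarrow> 'b \<Rightarrow> 't"
    and d1 d2 :: "'t \<Rightarrow> 't \<Rightarrow> 't"
  assumes A: "dual_pre_Poisson sA circ br"
    and B: "pre_Poisson sB dm od"
    and T: "is_tensor_product sA sB sT tp"
    and d1_bil: "bilinear_op sT d1"
    and d2_bil: "bilinear_op sT d2"
    and d1_def: "\<And>x y a b. d1 (tp x a) (tp y b) = tp (circ x y) (dm a b)"
    and d2_def: "\<And>x y a b. d2 (tp x a) (tp y b) = tp (br x y) (od a b)"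
  shows "pre_Lie sT d1 \<and> pre_Lie sT d2 \<and> compatible_pre_Lie sT d1 d2 \<and>
         compatible_Lie sT (\<lambda>X Y. d1 X Y - d1 Y X) (\<lambda>X Y. d2 X Y - d2 Y X)"
proof -
  have vs: "vector_space sT" and tp: "bilinear_map sA sB sT tp"
    and span: "module.span sT {tp x a | x a. True} = UNIV"
    using T unfolding is_tensor_product_def by blast+
  interpret dual_pre_Poisson_tensor_pre_Poisson sA sB sT circ br dm od tp d1 d2
    by (rule dual_pre_Poisson_tensor_pre_Poisson.intro) (fact A B tp d1_def d2_def)+
  have tri11: "trilinear_op sT (associator d1 d1)"
    by (rule trilinear_op_associator[OF vs d1_bil d1_bil])
  have tri22: "trilinear_op sT (associator d2 d2)"
    by (rule trilinear_op_associator[OF vs d2_bil d2_bil])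
  have tri_mixed: "trilinear_op sT (\<lambda>x y z. associator d1 d2 x y z + associator d2 d1 x y z)"
    by (intro trilinear_op_add trilinear_op_associator vs d1_bil d2_bil)
  note eq_on_span = trilinear_op_eq_on_span[OF vs span]
  have "compatible_pre_Lie sT d1 d2"
  proof (rule compatible_pre_LieI[OF vs d1_bil d2_bil])
    show "associator d1 d1 x y z = associator d1 d1 y x z" for x y z
      by (rule eq_on_span[OF tri11 trilinear_op_swap12[OF tri11]])
        (auto simp: d1_associator_tp_sym)
    show "associator d2 d2 x y z = associator d2 d2 y x z" for x y z
      by (rule eq_on_span[OF tri22 trilinear_op_swap12[OF tri22]])
        (auto simp: d2_associator_tp_sym)
    show "associator d1 d2 x y z + associator d2 d1 x y z
          = associator d1 d2 y x z + associator d2 d1 y x z" for x y z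
      by (rule eq_on_span[OF tri_mixed trilinear_op_swap12[OF tri_mixed]])
        (auto simp: d1_d2_associators_tp_sym)
  qed
  then show ?thesis
    using compatible_Lie_commutators by (simp add: compatible_pre_Lie_def)
qed

end
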